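(* Let $n\in\mathbf{N}$, $b\in\mathbf{N}$ and $\ell\in\mathbf{N}$. There exists $C>0$ such that $\|m^1_{b,\ell,L}(\cdot,t)\|_{L^2(\mathbf{R}^n_\xi)}\le Ct^{2(b-1)}e^{-t/2}+Ct^{-\frac n4-\ell}$ for all $t\ge1$.
   Context: Expressions $\cos(t\sqrt z)$ denote the entire function $\sum_m(-1)^mt^{2m}z^m/(2m)!$ of $z\in\mathbf{R}$ (equal to $\cosh(t\sqrt{-z})$ for $z<0$). For $r\ge0$, $c\in\mathbf{R}$, $a\in[0,1]$ with $4ar^2<1$, $t>0$: $f(r,c,t)=\cos(t\sqrt{r^2-c})$, $g(r,a,t)=\exp(-\frac{2tr^2}{1+\sqrt{1-4ar^2}})$. For $\xi\neq0$: $W^1_b(\xi,t)=\sum_{k=0}^{b-1}(\frac14)^k\frac1{k!}\partial_c^kf(|\xi|,0,t)$, $D^1_\ell(\xi,t)=\frac12\sum_{k=0}^{\ell-1}\frac1{k!}\partial_a^kg(|\xi|,0,t)$. Let $\chi_L$ be a smooth function on $[0,\infty)$ with $\chi_L(r)=0$ for $r\ge\frac13$ and $\chi_L(r)=1$ for $r\le\frac14$. Define $m^1_{b,\ell,L}(\xi,t)=\chi_L(|\xi|)\big[e^{-t/2}\cos(t\sqrt{|\xi|^2-\frac14})-e^{-t/2}W^1_b(\xi,t)-D^1_\ell(\xi,t)\big]$. *)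

theory Defs
  imports "HOL-Analysis.Analysis"
begin

text \<open>The entire function cos(t sqrt z) = sum_m (-1)^m t^(2m) z^m / (2m)!.\<close>
definition cos_sqrt :: "real \<Rightarrow> real \<Rightarrow> real" where
  "cos_sqrt t z = (\<Sum>m. (-1)^m * t^(2*m) * z^m / fact (2*m))"

definition f_fun :: "real \<Rightarrow> real \<Rightarrow> real \<Rightarrow> real" where
  "f_fun r c t = cos_sqrt t (r^2 - c)"

definition g_fun :: "real \<Rightarrow> real \<Rightarrow> real \<Rightarrow> real" where
  "g_fun r a t = exp (- (2 * t * r^2) / (1 + sqrt (1 - 4 * a * r^2)))"

definition W1 :: "nat \<Rightarrow> real \<Rightarrow> real \<Rightarrow> real" where
  "W1 b r t = (\<Sum>k<b. (1/4)^k * (1 / fact k) * (deriv ^^ k) (\<lambda>c. f_fun r c t) 0)"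

definition D1 :: "nat \<Rightarrow> real \<Rightarrow> real \<Rightarrow> real" where
  "D1 l r t = 1/2 * (\<Sum>k<l. (1 / fact k) * (deriv ^^ k) (\<lambda>a. g_fun r a t) 0)"

definition m1 :: "(real \<Rightarrow> real) \<Rightarrow> nat \<Rightarrow> nat \<Rightarrow> 'a::real_normed_vector \<Rightarrow> real \<Rightarrow> real" where
  "m1 chiL b l xi t = chiL (norm xi) *
     (exp (- t / 2) * cos_sqrt t ((norm xi)^2 - 1/4)
      - exp (- t / 2) * W1 b (norm xi) t - D1 l (norm xi) t)"

end

theory Submission
  imports Defs "HOL-Complex_Analysis.Complex_Analysis"
begin

text \<open>Write \<open>r = |\<xi>| \<le> 1/3\<close>.  Summing the power series gives
  \<open>exp(-t/2) cos(t sqrt(r^2 - 1/4)) = g(r,1,t)/2 + exp(-t/2 - t sqrt(1/4 - r^2))/2\<close>, so up to the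
  cut-off \<open>m1\<close> is half the Taylor remainder of order \<open>l\<close> of \<open>a \<mapsto> g(r,a,t)\<close> between \<open>0\<close> and \<open>1\<close>,
  plus terms of size \<open>exp(-t/2) t^(2(b-1))\<close>; for the latter, the derivatives of \<open>w \<mapsto> cos (sqrt w)\<close>
  are bounded by \<open>1\<close> on \<open>w \<ge> 0\<close> by an energy argument for the differential equation they satisfy.
  The function \<open>a \<mapsto> g(r,a,t)\<close> extends holomorphically to the disc of radius \<open>2/(9r^2)\<close>, where it is
  bounded by \<open>exp(-t r^2/2)\<close>, so Cauchy's estimates bound the remainder by a multiple of
  \<open>r^(2l) exp(-t r^2/2) \<le> C t^(-l) exp(-t r^2/4)\<close>.  Squaring and integrating over the unit ball, the
  Gaussian contributes \<open>t^(-n/2)\<close>.\<close>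

text \<open>\<open>cos_sqrt_hderiv k\<close> is the \<open>k\<close>-th derivative of the entire function \<open>w \<mapsto> cos \<surd>w\<close>; its
  coefficients come from differentiating the series \<open>\<Sum>\<^sub>j (-1)\<^sup>j w\<^sup>j / (2j)!\<close> term by term.\<close>

definition cos_sqrt_hderiv_coeff :: "nat \<Rightarrow> nat \<Rightarrow> real" where
  "cos_sqrt_hderiv_coeff k m = (-1)^(m+k) * fact (m+k) / (fact m * fact (2*(m+k)))"

definition cos_sqrt_hderiv :: "nat \<Rightarrow> real \<Rightarrow> real" where
  "cos_sqrt_hderiv k w = (\<Sum>m. cos_sqrt_hderiv_coeff k m * w^m)"

lemma abs_cos_sqrt_hderiv_coeff_le: "\<bar>cos_sqrt_hderiv_coeff k m\<bar> \<le> 1 / fact m"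
proof -
  have "fact (m+k) \<le> (fact (2*(m+k)) :: real)" by (intro fact_mono) auto
  then show ?thesis unfolding cos_sqrt_hderiv_coeff_def by (simp add: abs_mult field_simps)
qed

lemma summable_cos_sqrt_hderiv: "summable (\<lambda>m. cos_sqrt_hderiv_coeff k m * w^m)"
proof (rule summable_comparison_test[OF _ summable_exp[of "\<bar>w\<bar>"]])
  have "\<bar>cos_sqrt_hderiv_coeff k m\<bar> * \<bar>w\<bar>^m \<le> inverse (fact m) * \<bar>w\<bar>^m" for m
    using abs_cos_sqrt_hderiv_coeff_le by (intro mult_right_mono) (auto simp: divide_inverse)
  then show "\<exists>N. \<forall>m\<ge>N. norm (cos_sqrt_hderiv_coeff k m * w^m) \<le> inverse (fact m) * \<bar>w\<bar>^m"
    by (simp add: abs_mult power_abs)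
qed

lemma diffs_cos_sqrt_hderiv_coeff:
  "diffs (cos_sqrt_hderiv_coeff k) = cos_sqrt_hderiv_coeff (Suc k)"
proof
  fix m
  have "Suc m + k = Suc (m+k)" "m + Suc k = Suc (m+k)" by auto
  then show "diffs (cos_sqrt_hderiv_coeff k) m = cos_sqrt_hderiv_coeff (Suc k) m"
    unfolding diffs_def cos_sqrt_hderiv_coeff_def by (simp del: of_nat_Suc)
qed

lemma cos_sqrt_hderiv_has_derivative:
  "(cos_sqrt_hderiv k has_real_derivative cos_sqrt_hderiv (Suc k) w) (at w)"
  using termdiffs_strong_converges_everywhere[OF summable_cos_sqrt_hderiv, of k w]
  unfolding cos_sqrt_hderiv_def[abs_def] diffs_cos_sqrt_hderiv_coeff .

lemma cos_sqrt_hderiv_coeff_rec_0: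
  "(4 * real k + 2) * cos_sqrt_hderiv_coeff (Suc k) 0 + cos_sqrt_hderiv_coeff k 0 = 0"
proof -
  have "fact (2 * Suc k) = real (Suc (Suc (2*k))) * (real (Suc (2*k)) * fact (2*k))"
    by (simp add: algebra_simps)
  then show ?thesis unfolding cos_sqrt_hderiv_coeff_def
    by (simp del: fact_Suc of_nat_Suc add: field_simps) (simp add: algebra_simps)
qed

lemma cos_sqrt_hderiv_coeff_rec_Suc:
  "4 * cos_sqrt_hderiv_coeff (Suc (Suc k)) m + (4 * real k + 2) * cos_sqrt_hderiv_coeff (Suc k) (Suc m)
     + cos_sqrt_hderiv_coeff k (Suc m) = 0"
proof -
  define N where "N = m + k"
  define u where "u = cos_sqrt_hderiv_coeff (Suc k) (Suc m)"
  have idx: "m + Suc (Suc k) = Suc (Suc N)" "Suc m + Suc k = Suc (Suc N)" "Suc m + k = Suc N"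
    by (auto simp: N_def)
  have "cos_sqrt_hderiv_coeff (Suc (Suc k)) m = (real m + 1) * u"
  proof -
    define X :: real where "X = (-1) ^ Suc (Suc N) * fact (Suc (Suc N))"
    define Y :: real where "Y = fact (2 * Suc (Suc N))"
    have "Y \<noteq> 0" by (simp add: Y_def)
    moreover have "cos_sqrt_hderiv_coeff (Suc (Suc k)) m = X / (fact m * Y)"
      "u = X / ((real m + 1) * fact m * Y)"
      unfolding u_def cos_sqrt_hderiv_coeff_def idx X_def Y_def by simp_all
    ultimately show ?thesis by simp
  qed
  moreover have "(4 * real N + 6) * u = - cos_sqrt_hderiv_coeff k (Suc m)"
  proof -
    define A :: real where "A = fact (Suc N)"
    define B :: real where "B = fact (2 * Suc N)"
    define F :: real where "F = fact (Suc m)"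
    have "B \<noteq> 0" "F \<noteq> 0" by (simp_all add: B_def F_def)
    moreover have f2: "fact (2 * Suc (Suc N)) = (2 * real N + 4) * ((2 * real N + 3) * B)"
      by (simp add: B_def algebra_simps)
    moreover have f1: "fact (Suc (Suc N)) = (real N + 2) * A" by (simp add: A_def)
    ultimately have "u = (real N + 2) * ((-1)^N * A) / ((real N + 2) * (2 * (2 * real N + 3) * (F * B)))"
      "cos_sqrt_hderiv_coeff k (Suc m) = - ((-1)^N * A / (F * B))"
      unfolding u_def cos_sqrt_hderiv_coeff_def idx f1 f2
        A_def[symmetric] B_def[symmetric] F_def[symmetric] by (simp_all add: algebra_simps)
    then have "u = (-1)^N * A / (2 * (2 * real N + 3) * (F * B))"
      "cos_sqrt_hderiv_coeff k (Suc m) = - ((-1)^N * A / (F * B))"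
      by (simp_all only: mult_divide_mult_cancel_left_if) simp
    moreover have "4 * real N + 6 \<noteq> 0" by linarith
    ultimately have "((4 * real N + 6) * u) * (F * B) = (- cos_sqrt_hderiv_coeff k (Suc m)) * (F * B)"
      using \<open>B \<noteq> 0\<close> \<open>F \<noteq> 0\<close> by (simp add: divide_simps mult_ac)
    then show ?thesis using \<open>B \<noteq> 0\<close> \<open>F \<noteq> 0\<close> by (metis mult_cancel_right mult_eq_0_iff)
  qed
  ultimately show ?thesis by (simp add: N_def u_def algebra_simps)
qed

lemma cos_sqrt_hderiv_ode:
  "4 * w * cos_sqrt_hderiv (Suc (Suc k)) w + (4 * real k + 2) * cos_sqrt_hderiv (Suc k) w
     + cos_sqrt_hderiv k w = 0"
proof -
  let ?a = "cos_sqrt_hderiv_coeff"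
  define F where "F m = (if m = 0 then 0 else ?a (Suc (Suc k)) (m - 1) * w^m)" for m
  have sums: "(\<lambda>m. ?a j m * w^m) sums cos_sqrt_hderiv j w" for j
    unfolding cos_sqrt_hderiv_def using summable_cos_sqrt_hderiv by (rule summable_sums)
  have "(\<lambda>m. F (Suc m)) sums (w * cos_sqrt_hderiv (Suc (Suc k)) w)"
    using sums_mult[OF sums, of w "Suc (Suc k)"] by (simp add: F_def algebra_simps)
  then have "F sums (w * cos_sqrt_hderiv (Suc (Suc k)) w)"
    using sums_Suc[of F] by (simp add: F_def)
  then have "(\<lambda>m. 4 * F m + (4 * real k + 2) * (?a (Suc k) m * w^m) + ?a k m * w^m) sums
      (4 * (w * cos_sqrt_hderiv (Suc (Suc k)) w) + (4 * real k + 2) * cos_sqrt_hderiv (Suc k) w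
        + cos_sqrt_hderiv k w)"
    by (intro sums_add sums_mult sums)
  moreover have "4 * F m + (4 * real k + 2) * (?a (Suc k) m * w^m) + ?a k m * w^m = 0" for m
  proof (cases m)
    case 0
    then show ?thesis using cos_sqrt_hderiv_coeff_rec_0[of k] by (simp add: F_def)
  next
    case (Suc m')
    then have "4 * F m + (4 * real k + 2) * (?a (Suc k) m * w^m) + ?a k m * w^m
        = (4 * ?a (Suc (Suc k)) m' + (4 * real k + 2) * ?a (Suc k) (Suc m') + ?a k (Suc m')) * w^m"
      by (simp add: F_def algebra_simps)
    then show ?thesis using cos_sqrt_hderiv_coeff_rec_Suc[of k m'] by simp
  qed
  ultimately have "(\<lambda>m. 0) sums (4 * (w * cos_sqrt_hderiv (Suc (Suc k)) w)
      + (4 * real k + 2) * cos_sqrt_hderiv (Suc k) w + cos_sqrt_hderiv k w)"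
    by simp
  then show ?thesis using sums_unique2 sums_zero by (metis mult.assoc)
qed

text \<open>The energy \<open>y\<^sub>k\<^sup>2 + 4 w y\<^sub>k\<^sub>+\<^sub>1\<^sup>2\<close> of \<open>y\<^sub>j = cos_sqrt_hderiv j\<close> is nonincreasing on
  \<open>w \<ge> 0\<close> by the differential equation above, and it is at most \<open>1\<close> at \<open>w = 0\<close>.\<close>

lemma abs_cos_sqrt_hderiv_le_1:
  assumes "w \<ge> 0"
  shows "\<bar>cos_sqrt_hderiv k w\<bar> \<le> 1"
proof -
  let ?y = cos_sqrt_hderiv
  define E where "E x = (?y k x)^2 + 4 * x * (?y (Suc k) x)^2" for x
  have E_deriv: "(E has_real_derivative (- 8 * real k * (?y (Suc k) x)^2)) (at x)" for x
  proof -
    have dE: "(E has_real_derivative 2 * ?y k x * ?y (Suc k) x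
        + (4 * (?y (Suc k) x)^2 + 4 * x * (2 * ?y (Suc k) x * ?y (Suc (Suc k)) x))) (at x)"
      unfolding E_def
      by (rule derivative_eq_intros cos_sqrt_hderiv_has_derivative refl | simp)+
    have ode: "4 * x * ?y (Suc (Suc k)) x = - (4 * real k + 2) * ?y (Suc k) x - ?y k x"
      using cos_sqrt_hderiv_ode[of x k] by linarith
    have "2 * ?y k x * ?y (Suc k) x
        + (4 * (?y (Suc k) x)^2 + 4 * x * (2 * ?y (Suc k) x * ?y (Suc (Suc k)) x))
        = 2 * ?y k x * ?y (Suc k) x + 4 * (?y (Suc k) x)^2
          + 2 * ?y (Suc k) x * (4 * x * ?y (Suc (Suc k)) x)"
      by (simp add: algebra_simps)
    also have "\<dots> = - 8 * real k * (?y (Suc k) x)^2"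
      unfolding ode by (simp add: algebra_simps power2_eq_square)
    finally show ?thesis using dE by simp
  qed
  have "E w \<le> E 0"
  proof (rule DERIV_nonpos_imp_nonincreasing[OF assms])
    show "\<exists>y. (E has_real_derivative y) (at x) \<and> y \<le> 0" for x
      using E_deriv by (intro exI conjI) (auto simp: mult_nonneg_nonneg)
  qed
  moreover have "E 0 = (cos_sqrt_hderiv_coeff k 0)^2"
    by (simp add: E_def cos_sqrt_hderiv_def)
  moreover have "(?y k w)^2 \<le> E w" using assms by (simp add: E_def)
  moreover have "(cos_sqrt_hderiv_coeff k 0)^2 \<le> 1"
    using abs_cos_sqrt_hderiv_coeff_le[of k 0] by (simp add: abs_square_le_1)
  ultimately have "(?y k w)^2 \<le> 1" by linarith
  then show ?thesis using abs_square_le_1 by blast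
qed

lemma cos_sqrt_eq_cos_sqrt_hderiv_0: "cos_sqrt t z = cos_sqrt_hderiv 0 (t^2 * z)"
  unfolding cos_sqrt_def cos_sqrt_hderiv_def cos_sqrt_hderiv_coeff_def
  by (simp add: power_mult power_mult_distrib mult.assoc)

lemma higher_deriv_f_fun:
  "(deriv ^^ k) (\<lambda>c. f_fun r c t) = (\<lambda>c. (-(t^2))^k * cos_sqrt_hderiv k (t^2 * (r^2 - c)))"
proof (induction k)
  case 0
  then show ?case by (simp add: f_fun_def cos_sqrt_eq_cos_sqrt_hderiv_0)
next
  case (Suc k)
  have "((\<lambda>c. (-(t^2))^k * cos_sqrt_hderiv k (t^2 * (r^2 - c))) has_real_derivative
      (-(t^2))^Suc k * cos_sqrt_hderiv (Suc k) (t^2 * (r^2 - c))) (at c)" for c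
    by (rule derivative_eq_intros DERIV_chain2[OF cos_sqrt_hderiv_has_derivative] refl | simp)+
  then show ?case
    by (simp add: Suc.IH DERIV_imp_deriv fun_eq_iff del: funpow.simps) (simp add: Suc.IH DERIV_imp_deriv)
qed

lemma W1_eq:
  "W1 b r t = (\<Sum>k<b. (1/4)^k * (1 / fact k) * ((-(t^2))^k * cos_sqrt_hderiv k (t^2 * r^2)))"
  unfolding W1_def higher_deriv_f_fun by simp

lemma abs_W1_le:
  assumes "t \<ge> 1"
  shows "\<bar>W1 b r t\<bar> \<le> real b * t powr (2 * (real b - 1))"
proof -
  have "\<bar>(1/4)^k * (1 / fact k) * ((-(t^2))^k * cos_sqrt_hderiv k (t^2 * r^2))\<bar>
      \<le> t powr (2 * (real b - 1))" if "k < b" for k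
  proof -
    have "(1/4::real)^k * (1 / fact k) \<le> 1"
      by (intro mult_le_one) (auto simp: power_le_one)
    moreover have "\<bar>cos_sqrt_hderiv k (t^2 * r^2)\<bar> \<le> 1"
      by (rule abs_cos_sqrt_hderiv_le_1) simp
    ultimately have "((1/4::real)^k * (1 / fact k)) * (t^(2*k) * \<bar>cos_sqrt_hderiv k (t^2 * r^2)\<bar>)
        \<le> 1 * (t^(2*k) * 1)"
      using assms by (intro mult_mono) auto
    then have "\<bar>(1/4)^k * (1 / fact k) * ((-(t^2))^k * cos_sqrt_hderiv k (t^2 * r^2))\<bar>
        \<le> 1 * (t^(2*k) * 1)"
      by (simp add: abs_mult power_abs power_mult)
    also have "\<dots> = t powr (real (2*k))" using assms by (simp only: powr_realpow)
    also have "\<dots> \<le> t powr (2 * (real b - 1))" using that assms by (intro powr_mono) auto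
    finally show ?thesis .
  qed
  then have "\<bar>W1 b r t\<bar> \<le> (\<Sum>k<b. t powr (2 * (real b - 1)))"
    unfolding W1_eq by (intro order.trans[OF sum_abs] sum_mono) auto
  then show ?thesis by simp
qed

lemma cosh_sums_even: "(\<lambda>m. x^(2*m) / fact (2*m)) sums cosh (x::real)"
proof -
  have "(\<lambda>n. if even n then x ^ n /\<^sub>R fact n else 0) sums cosh x" by (rule cosh_converges)
  then have "(\<lambda>m. (\<lambda>n. if even n then x ^ n /\<^sub>R fact n else 0) (2*m)) sums cosh x"
    by (subst sums_mono_reindex) (auto simp: strict_mono_def elim!: oddE)
  then show ?thesis by (simp add: divide_inverse mult.commute)
qed

lemma exp_cos_sqrt_eq_g_fun:
  assumes "r^2 < 1/4"
  shows "exp (-t/2) * cos_sqrt t (r^2 - 1/4)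
     = 1/2 * g_fun r 1 t + 1/2 * exp (-t/2 - t * sqrt (1/4 - r^2))"
proof -
  define \<sigma> where "\<sigma> = sqrt (1/4 - r^2)"
  have \<sigma>: "\<sigma> \<ge> 0" "\<sigma>^2 = 1/4 - r^2" using assms by (auto simp: \<sigma>_def)
  then have "r^2 = 1/4 - \<sigma>^2" by simp
  have "(-1)^m * t^(2*m) * (r^2 - 1/4)^m = (t * \<sigma>)^(2*m)" for m
  proof -
    have "(t * \<sigma>)^2 = t^2 * ((-1) * (r^2 - 1/4))" using \<sigma> by (simp add: power_mult_distrib)
    then have "(t * \<sigma>)^(2*m) = (t^2 * ((-1) * (r^2 - 1/4)))^m" by (simp only: power_mult)
    then show ?thesis by (simp only: power_mult_distrib) (simp add: power_mult)
  qed
  then have "(\<lambda>m. (-1)^m * t^(2*m) * (r^2 - 1/4)^m / fact (2*m)) = (\<lambda>m. (t * \<sigma>)^(2*m) / fact (2*m))"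
    by simp
  then have "cos_sqrt t (r^2 - 1/4) = cosh (t * \<sigma>)"
    unfolding cos_sqrt_def using cosh_sums_even sums_unique by metis
  have "sqrt (1 - 4 * 1 * r^2) = 2 * \<sigma>"
    using \<sigma> by (intro real_sqrt_unique) (auto simp: power_mult_distrib)
  moreover have "- (2 * t * r^2) = (-t/2 + t * \<sigma>) * (1 + 2 * \<sigma>)"
    unfolding \<open>r^2 = 1/4 - \<sigma>^2\<close> by (simp add: algebra_simps power2_eq_square)
  ultimately have "g_fun r 1 t = exp (-t/2 + t * \<sigma>)"
    using \<sigma>(1) unfolding g_fun_def by simp
  have "exp (-t/2) * cos_sqrt t (r^2 - 1/4) = exp (-t/2) * ((exp (t * \<sigma>) + exp (- (t * \<sigma>))) / 2)"
    unfolding \<open>cos_sqrt t (r^2 - 1/4) = cosh (t * \<sigma>)\<close> cosh_def by simp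
  also have "\<dots> = 1/2 * exp (-t/2 + t * \<sigma>) + 1/2 * exp (-t/2 + - (t * \<sigma>))"
    by (simp only: exp_add) (simp add: algebra_simps)
  finally show ?thesis
    unfolding \<open>g_fun r 1 t = exp (-t/2 + t * \<sigma>)\<close> \<sigma>_def by simp
qed

lemma holomorphic_taylor_remainder_le:
  fixes F :: "complex \<Rightarrow> complex"
  assumes holo: "F holomorphic_on ball 0 \<rho>" and R: "0 < R" "R < \<rho>" and z: "2 * norm z \<le> R"
    and bound: "\<And>w. norm w = R \<Longrightarrow> norm (F w) \<le> B"
  shows "norm (F z - (\<Sum>k<l. (deriv ^^ k) F 0 / fact k * z^k)) \<le> 2 * B * (norm z / R)^l"
proof -
  define q where "q = norm z / R"
  have q: "0 \<le> q" "q \<le> 1/2" using R z by (auto simp: q_def field_simps)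
  define c where "c n = (deriv ^^ n) F 0 / fact n * z^n" for n
  have "z \<in> ball 0 \<rho>" using R z by simp
  then have "c sums F z" using holomorphic_power_series[OF holo] by (simp add: c_def[abs_def])
  then have tail: "(\<lambda>n. c (n + l)) sums (F z - (\<Sum>k<l. c k))"
    by (simp add: sums_iff_shift)
  have c_le: "norm (c n) \<le> B * q^n" for n
  proof -
    have "norm ((deriv ^^ n) F 0) \<le> fact n * B / R^n"
    proof (rule Cauchy_inequality)
      show "F holomorphic_on ball 0 R" using R by (intro holomorphic_on_subset[OF holo]) auto
      show "continuous_on (cball 0 R) F"
        using holo R by (intro holomorphic_on_imp_continuous_on holomorphic_on_subset[OF holo]) auto
    qed (use R bound in auto)
    then have "norm ((deriv ^^ n) F 0) / fact n * norm z ^ n \<le> B / R^n * norm z ^ n"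
      by (intro mult_right_mono) (simp_all add: field_simps)
    then show ?thesis by (simp add: c_def q_def norm_mult norm_divide norm_power power_divide)
  qed
  have B: "B \<ge> 0"
  proof -
    have "norm (F (of_real R)) \<le> B" using R by (intro bound) simp
    then show ?thesis by (meson norm_ge_zero order.trans)
  qed
  have geom: "(\<lambda>n. B * q^l * q^n) sums (B * q^l / (1 - q))"
    using sums_mult[OF geometric_sums[of q], of "B * q^l"] q by simp
  have c_tail_le: "norm (c (n + l)) \<le> B * q^l * q^n" for n
    using c_le[of "n + l"] by (simp add: power_add mult_ac)
  have summable: "summable (\<lambda>n. norm (c (n + l)))"
    using c_tail_le by (intro summable_comparison_test'[OF sums_summable[OF geom]]) simp
  have "norm (F z - (\<Sum>k<l. c k)) = norm (\<Sum>n. c (n + l))"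
    using tail sums_unique by metis
  also have "\<dots> \<le> (\<Sum>n. norm (c (n + l)))" by (rule summable_norm[OF summable])
  also have "\<dots> \<le> B * q^l / (1 - q)"
    using c_tail_le by (intro sums_le[OF _ summable_sums[OF summable] geom])
  also have "\<dots> = B * q^l * (1 / (1 - q))" by simp
  also have "\<dots> \<le> B * q^l * 2"
    using q B by (intro mult_left_mono) (auto simp: field_simps)
  finally show ?thesis by (simp add: c_def q_def)
qed

lemma has_real_derivative_Re_of_holomorphic:
  assumes "F holomorphic_on U" "open U" "of_real x \<in> U"
  shows "((\<lambda>y. Re (F (of_real y))) has_real_derivative Re (deriv F (of_real x))) (at x)"
proof -
  have "(F has_field_derivative deriv F (of_real x)) (at (of_real x))"
    using assms by (intro holomorphic_derivI)
  then have "((\<lambda>y. F (of_real y)) has_vector_derivative deriv F (of_real x)) (at x)"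
    by (rule has_vector_derivative_real_field)
  then have "((\<lambda>y. Re (F (of_real y))) has_vector_derivative Re (deriv F (of_real x))) (at x)"
    by (rule bounded_linear.has_vector_derivative[OF bounded_linear_Re])
  then show ?thesis by (simp add: has_real_derivative_iff_has_vector_derivative)
qed

lemma open_Collect_of_real_mem: "open U \<Longrightarrow> open {x. complex_of_real x \<in> U}"
  using open_vimage[OF _ continuous_on_of_real_id] by (simp add: vimage_def)

context
  fixes F :: "complex \<Rightarrow> complex" and f :: "real \<Rightarrow> real" and U :: "complex set"
  assumes holo: "F holomorphic_on U" and U: "open U"
    and f_eq: "\<And>x. of_real x \<in> U \<Longrightarrow> f x = Re (F (of_real x))"
begin

lemma higher_deriv_eq_Re_higher_deriv:
  "of_real x \<in> U \<Longrightarrow> (deriv ^^ k) f x = Re ((deriv ^^ k) F (of_real x))"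
proof (induction k arbitrary: x)
  case 0
  then show ?case using f_eq by simp
next
  case (Suc k)
  have "eventually (\<lambda>y. (deriv ^^ k) f y = Re ((deriv ^^ k) F (of_real y))) (nhds x)"
    using Suc open_Collect_of_real_mem[OF U] by (intro eventually_nhds_in_open[THEN eventually_mono]) auto
  then have "(deriv ^^ Suc k) f x = deriv (\<lambda>y. Re ((deriv ^^ k) F (of_real y))) x"
    by (simp add: deriv_cong_ev)
  also have "\<dots> = Re ((deriv ^^ Suc k) F (of_real x))"
    using Suc.prems
    by (auto intro!: DERIV_imp_deriv has_real_derivative_Re_of_holomorphic holomorphic_higher_deriv holo U)
  finally show ?case .
qed

lemma higher_deriv_has_real_derivative:
  assumes "of_real x \<in> U"
  shows "((deriv ^^ k) f has_real_derivative (deriv ^^ Suc k) f x) (at x)"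
proof -
  have "((\<lambda>y. Re ((deriv ^^ k) F (of_real y))) has_real_derivative Re ((deriv ^^ Suc k) F (of_real x))) (at x)"
    using assms by (auto intro!: has_real_derivative_Re_of_holomorphic holomorphic_higher_deriv holo U)
  then have "((deriv ^^ k) f has_real_derivative Re ((deriv ^^ Suc k) F (of_real x))) (at x)"
    by (rule has_field_derivative_transform_within_open[OF _ open_Collect_of_real_mem[OF U]])
       (use assms higher_deriv_eq_Re_higher_deriv in auto)
  then show ?thesis using higher_deriv_eq_Re_higher_deriv[OF assms, of "Suc k"] by simp
qed

end

text \<open>The holomorphic extension of \<open>a \<mapsto> g_fun r a t\<close> to the half-plane \<open>4 r\<^sup>2 Re z < 1\<close>, on which
  \<open>1 - 4 z r\<^sup>2\<close> stays off the branch cut of \<open>csqrt\<close>.\<close>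

definition g_complex :: "real \<Rightarrow> real \<Rightarrow> complex \<Rightarrow> complex" where
  "g_complex r t z = exp (- of_real (2 * t * r^2) / (1 + csqrt (1 - 4 * z * of_real (r^2))))"

lemma holomorphic_on_g_complex: "g_complex r t holomorphic_on {z. 4 * r^2 * Re z < 1}"
  unfolding g_complex_def[abs_def]
proof (intro holomorphic_intros)
  fix z assume "z \<in> {z. 4 * r^2 * Re z < 1}"
  then have "0 < Re (1 - 4 * z * of_real (r^2))" by (simp add: mult_ac)
  then show "1 - 4 * z * of_real (r^2) \<notin> \<real>\<^sub>\<le>\<^sub>0"
    by (metis Re_complex_of_real complex_nonpos_Reals_iff not_le)
next
  fix z :: complex
  have "0 \<le> Re (csqrt (1 - 4 * z * of_real (r^2)))" by (rule Re_csqrt)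
  then show "1 + csqrt (1 - 4 * z * of_real (r^2)) \<noteq> 0"
    by (auto dest!: arg_cong[where f = Re] simp del: csqrt.sel)
qed

lemma g_complex_of_real:
  assumes "4 * a * r^2 < 1"
  shows "g_complex r t (of_real a) = of_real (g_fun r a t)"
proof -
  have "1 - 4 * of_real a * of_real (r^2) = (of_real (1 - 4 * a * r^2) :: complex)" by simp
  moreover have "csqrt (of_real (1 - 4 * a * r^2)) = of_real (sqrt (1 - 4 * a * r^2))"
    using assms by (subst csqrt_of_real_nonneg) auto
  ultimately show ?thesis unfolding g_complex_def g_fun_def
    by (simp add: exp_of_real[symmetric] del: of_real_diff)
qed

lemma
  assumes "4 * a * r^2 < 1"
  shows higher_deriv_g_fun_eq_Re:
      "(deriv ^^ k) (\<lambda>a. g_fun r a t) a = Re ((deriv ^^ k) (g_complex r t) (of_real a))"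
    and higher_deriv_g_fun_has_derivative:
      "((deriv ^^ k) (\<lambda>a. g_fun r a t) has_real_derivative (deriv ^^ Suc k) (\<lambda>a. g_fun r a t) a) (at a)"
proof -
  have U: "open {z. 4 * r^2 * Re z < 1}" by (intro open_Collect_less continuous_intros)
  have eq: "g_fun r x t = Re (g_complex r t (of_real x))" if "of_real x \<in> {z. 4 * r^2 * Re z < 1}" for x
    using that g_complex_of_real by (simp add: mult_ac)
  have a: "of_real a \<in> {z. 4 * r^2 * Re z < 1}" using assms by (simp add: mult_ac)
  show "(deriv ^^ k) (\<lambda>a. g_fun r a t) a = Re ((deriv ^^ k) (g_complex r t) (of_real a))"
    by (rule higher_deriv_eq_Re_higher_deriv[OF holomorphic_on_g_complex U eq a])
  show "((deriv ^^ k) (\<lambda>a. g_fun r a t) has_real_derivative (deriv ^^ Suc k) (\<lambda>a. g_fun r a t) a) (at a)"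
    by (rule higher_deriv_has_real_derivative[OF holomorphic_on_g_complex U eq a])
qed

lemma norm_g_complex_le:
  assumes "4 * r^2 * norm z \<le> 1" "t \<ge> 0"
  shows "norm (g_complex r t z) \<le> exp (- t * r^2 / 2)"
proof -
  define s where "s = csqrt (1 - 4 * z * of_real (r^2))"
  have "norm (4 * z * of_real (r^2)) \<le> 1" using assms by (simp add: norm_mult norm_power mult_ac)
  then have "norm (1 - 4 * z * of_real (r^2)) \<le> 2"
    using norm_triangle_ineq4[of 1 "4 * z * of_real (r^2)"] by simp
  then have "(norm s)^2 \<le> 2" by (simp add: s_def)
  then have "(Re s)^2 + (Im s)^2 \<le> 2" by (simp add: cmod_power2)
  moreover have Re_s: "Re s \<ge> 0" unfolding s_def by (rule Re_csqrt)
  moreover have "(cmod (1 + s))^2 = 1 + 2 * Re s + ((Re s)^2 + (Im s)^2)"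
    unfolding cmod_power2 by (simp add: power2_eq_square algebra_simps)
  ultimately have D_le: "(cmod (1 + s))^2 \<le> 4 * (1 + Re s)" by (smt (verit))
  have D_pos: "(cmod (1 + s))^2 > 0" using Re_s by (simp add: cmod_power2 add_pos_nonneg)
  have "2 * t * r^2 / 4 * (cmod (1 + s))^2 \<le> 2 * t * r^2 / 4 * (4 * (1 + Re s))"
    using D_le assms(2) by (intro mult_left_mono) auto
  then have "2 * t * r^2 / 4 \<le> 2 * t * r^2 * (1 + Re s) / (cmod (1 + s))^2"
    using D_pos by (simp add: pos_le_divide_eq algebra_simps)
  moreover have "Re (- of_real (2 * t * r^2) / (1 + s)) = - (2 * t * r^2 * (1 + Re s) / (cmod (1 + s))^2)"
    by (simp add: Re_divide cmod_power2)
  ultimately have "Re (- of_real (2 * t * r^2) / (1 + s)) \<le> - t * r^2 / 2" by simp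
  then show ?thesis unfolding g_complex_def s_def[symmetric] by (simp add: norm_exp_eq_Re)
qed

lemma g_fun_taylor_remainder_le:
  assumes r: "0 < r" "r \<le> 1/3" and t: "t \<ge> 0"
  shows "\<bar>g_fun r 1 t - (\<Sum>k<l. (deriv ^^ k) (\<lambda>a. g_fun r a t) 0 / fact k)\<bar>
          \<le> 2 * exp (- t * r^2 / 2) * (9 * r^2 / 2)^l"
proof -
  define R where "R = 2 / (9 * r^2)"
  have r2: "0 < r^2" "r^2 \<le> 1/9" using r power_mono[of r "1/3" 2] by (auto simp: power_divide)
  have R: "0 < R" "R < 1 / (4 * r^2)" "2 * norm (1::complex) \<le> R"
    using r2 by (auto simp: R_def field_simps)
  have R_inv: "norm (1::complex) / R = 9 * r^2 / 2" unfolding R_def by simp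
  have "ball 0 (1 / (4 * r^2)) \<subseteq> {z. 4 * r^2 * Re z < 1}"
  proof
    fix z :: complex assume "z \<in> ball 0 (1 / (4 * r^2))"
    then have "Re z < 1 / (4 * r^2)" using complex_Re_le_cmod[of z] by simp
    then show "z \<in> {z. 4 * r^2 * Re z < 1}" using r2 by (simp add: field_simps)
  qed
  then have "g_complex r t holomorphic_on ball 0 (1 / (4 * r^2))"
    by (rule holomorphic_on_subset[OF holomorphic_on_g_complex])
  moreover have "norm (g_complex r t w) \<le> exp (- t * r^2 / 2)" if "norm w = R" for w
  proof (rule norm_g_complex_le[OF _ t])
    have "4 * r^2 * R = 8/9" using r2 by (simp add: R_def field_simps)
    then show "4 * r^2 * norm w \<le> 1" unfolding that by linarith
  qed
  ultimately have "norm (g_complex r t 1 - (\<Sum>k<l. (deriv ^^ k) (g_complex r t) 0 / fact k * 1^k))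
      \<le> 2 * exp (- t * r^2 / 2) * (norm (1::complex) / R)^l"
    by (rule holomorphic_taylor_remainder_le[OF _ R])
  then have bound: "norm (g_complex r t 1 - (\<Sum>k<l. (deriv ^^ k) (g_complex r t) 0 / fact k * 1^k))
      \<le> 2 * exp (- t * r^2 / 2) * (9 * r^2 / 2)^l"
    by (simp only: R_inv)
  have eq: "g_fun r 1 t - (\<Sum>k<l. (deriv ^^ k) (\<lambda>a. g_fun r a t) 0 / fact k)
      = Re (g_complex r t 1 - (\<Sum>k<l. (deriv ^^ k) (g_complex r t) 0 / fact k * 1^k))"
  proof -
    have "Re (z / fact k) = Re z / fact k" for z :: complex and k
      by (metis Re_divide_of_real of_real_fact)
    then show ?thesis
      using r2 g_complex_of_real[of 1 r t] higher_deriv_g_fun_eq_Re[of 0 r] by (simp add: Re_sum)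
  qed
  show ?thesis unfolding eq by (rule order.trans[OF abs_Re_le_cmod bound])
qed

lemma abs_half_g_fun_minus_D1_le:
  assumes r: "0 \<le> r" "r \<le> 1/3" and t: "t \<ge> 0"
  shows "\<bar>1/2 * g_fun r 1 t - D1 l r t\<bar> \<le> exp (- t * r^2 / 2) * (9 * r^2 / 2)^l"
proof (cases "r = 0")
  case True
  then have "(\<lambda>a. g_fun r a t) = (\<lambda>_. 1)" by (simp add: g_fun_def)
  then show ?thesis using True
    by (cases l) (simp_all add: D1_def g_fun_def lessThan_Suc_eq_insert_0 sum.reindex)
next
  case False
  then have "\<bar>g_fun r 1 t - (\<Sum>k<l. (deriv ^^ k) (\<lambda>a. g_fun r a t) 0 / fact k)\<bar>
      \<le> 2 * exp (- t * r^2 / 2) * (9 * r^2 / 2)^l"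
    using r t by (intro g_fun_taylor_remainder_le) auto
  then show ?thesis unfolding D1_def by (simp add: abs_mult field_simps)
qed

lemma pow_div_fact_le_exp: "x \<ge> 0 \<Longrightarrow> x^n / fact n \<le> exp (x::real)"
  using sum_le_suminf[OF summable_exp_generic[of x], of "{n}"]
  by (simp add: exp_def divide_inverse mult.commute)

lemma abs_half_g_fun_minus_D1_le_powr:
  assumes r: "0 \<le> r" "r \<le> 1/3" and t: "t > 0"
  shows "\<bar>1/2 * g_fun r 1 t - D1 l r t\<bar> \<le> 18^l * fact l * t powr (- real l) * exp (- t * r^2 / 4)"
proof -
  define u where "u = t * r^2"
  have u: "u \<ge> 0" using t by (simp add: u_def)
  have "(u/4)^l / fact l \<le> exp (u/4)" using u by (intro pow_div_fact_le_exp) simp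
  then have u_le: "u^l \<le> 4^l * fact l * exp (u/4)" by (simp add: field_simps power_divide)
  have "(9 * r^2 / 2)^l = (9/2)^l * u^l * t powr (- real l)"
    using t by (simp add: u_def power_mult_distrib powr_minus powr_realpow field_simps power_divide)
  then have "exp (- t * r^2 / 2) * (9 * r^2 / 2)^l = (9/2)^l * t powr (- real l) * (u^l * exp (- u / 2))"
    by (simp add: u_def mult_ac)
  also have "\<dots> \<le> (9/2)^l * t powr (- real l) * (4^l * fact l * exp (u/4) * exp (- u / 2))"
    using u_le by (intro mult_left_mono mult_right_mono) auto
  also have "\<dots> = 18^l * fact l * t powr (- real l) * exp (- t * r^2 / 4)"
  proof -
    have "exp (u/4) * exp (- u / 2) = exp (- t * r^2 / 4)" by (simp add: u_def flip: exp_add)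
    moreover have "(9/2::real)^l * 4^l = 18^l" by (simp flip: power_mult_distrib)
    moreover have "(9/2)^l * t powr (- real l) * (4^l * fact l * exp (u/4) * exp (- u / 2))
       = ((9/2::real)^l * 4^l) * fact l * t powr (- real l) * (exp (u/4) * exp (- u / 2))"
      by (simp only: mult_ac)
    ultimately show ?thesis by simp
  qed
  finally show ?thesis using abs_half_g_fun_minus_D1_le[OF r less_imp_le[OF t], of l] by linarith
qed

lemma borel_measurable_has_real_derivative_param:
  fixes F :: "'a \<Rightarrow> real \<Rightarrow> real"
  assumes A: "open A" "a \<in> A"
    and meas: "\<And>x. x \<in> A \<Longrightarrow> (\<lambda>r. F r x) \<in> borel_measurable M"
    and deriv: "\<And>r. r \<in> space M \<Longrightarrow> (F r has_real_derivative F' r) (at a)"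
  shows "F' \<in> borel_measurable M"
proof -
  obtain \<delta> where \<delta>: "\<delta> > 0" "ball a \<delta> \<subseteq> A" using A by (rule openE)
  define h where "h n = \<delta> / 2 * inverse (real (Suc n))" for n
  have h_pos: "h n > 0" for n using \<delta> by (simp add: h_def)
  have "a + h n \<in> A" for n
  proof -
    have "h n \<le> \<delta> / 2" using \<delta> by (simp add: h_def field_simps)
    then show ?thesis using \<delta> h_pos[of n] by (intro subsetD[OF \<delta>(2)]) (simp add: dist_norm)
  qed
  then have quot_meas: "(\<lambda>r. (F r (a + h n) - F r a) / h n) \<in> borel_measurable M" for n
    using meas A(2) by (intro borel_measurable_divide borel_measurable_diff) auto
  have h_lim: "filterlim h (at 0) sequentially"
  proof (rule filterlim_atI)
    show "h \<longlonglongrightarrow> 0"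
      unfolding h_def[abs_def] by (intro tendsto_mult_right_zero LIMSEQ_inverse_real_of_nat)
    have "h n \<noteq> 0" for n using h_pos[of n] by simp
    then show "\<forall>\<^sub>F n in sequentially. h n \<noteq> 0" by simp
  qed
  have quot_lim: "(\<lambda>n. (F r (a + h n) - F r a) / h n) \<longlonglongrightarrow> F' r" if "r \<in> space M" for r
  proof -
    have "((\<lambda>x. (F r (a + x) - F r a) / x) \<longlongrightarrow> F' r) (at 0)"
      using deriv[OF that] unfolding DERIV_def .
    from filterlim_compose[OF this h_lim] show ?thesis by simp
  qed
  show ?thesis by (rule borel_measurable_LIMSEQ_real[OF quot_lim quot_meas])
qed

lemma borel_measurable_higher_deriv_g_fun:
  assumes "\<bar>a\<bar> < 1"
  shows "(\<lambda>r. indicator {r. \<bar>r\<bar> < 1/2} r * (deriv ^^ k) (\<lambda>a. g_fun r a t) a) \<in> borel_measurable borel"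
  using assms
proof (induction k arbitrary: a)
  case 0
  show ?case unfolding funpow_0 g_fun_def by measurable
next
  case (Suc k)
  show ?case
  proof (rule borel_measurable_has_real_derivative_param[where A = "{a. \<bar>a\<bar> < 1}"])
    show "open {a::real. \<bar>a\<bar> < 1}" by (intro open_Collect_less continuous_intros)
    fix r :: real
    show "((\<lambda>x. indicator {r. \<bar>r\<bar> < 1/2} r * (deriv ^^ k) (\<lambda>a. g_fun r a t) x) has_real_derivative
        indicator {r. \<bar>r\<bar> < 1/2} r * (deriv ^^ Suc k) (\<lambda>a. g_fun r a t) a) (at a)"
    proof (cases "\<bar>r\<bar> < 1/2")
      case True
      have "r^2 < 1/4" using power_strict_mono[OF True, of 2] by (simp add: power2_abs power_divide)
      moreover have "a * r^2 \<le> 1 * r^2" using Suc.prems by (intro mult_right_mono) auto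
      ultimately have "4 * a * r^2 < 1" by linarith
      then have "((deriv ^^ k) (\<lambda>a. g_fun r a t) has_real_derivative (deriv ^^ Suc k) (\<lambda>a. g_fun r a t) a) (at a)"
        by (rule higher_deriv_g_fun_has_derivative)
      from DERIV_cmult[OF this, of 1] show ?thesis using True by simp
    qed simp
  qed (use Suc in auto)
qed

lemma borel_measurable_indicator_D1:
  "(\<lambda>r. indicator {r. \<bar>r\<bar> < 1/2} r * D1 l r t) \<in> borel_measurable borel"
proof -
  have "(\<lambda>r. indicator {r. \<bar>r\<bar> < 1/2} r * D1 l r t) =
      (\<lambda>r. 1/2 * (\<Sum>k<l. 1 / fact k * (indicator {r. \<bar>r\<bar> < 1/2} r * (deriv ^^ k) (\<lambda>a. g_fun r a t) 0)))"
    by (simp add: D1_def sum_distrib_left mult_ac)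
  then show ?thesis using borel_measurable_higher_deriv_g_fun[of 0] by simp
qed

lemma borel_measurable_cos_sqrt_hderiv: "cos_sqrt_hderiv k \<in> borel_measurable borel"
  using DERIV_isCont[OF cos_sqrt_hderiv_has_derivative]
  by (intro borel_measurable_continuous_onI continuous_at_imp_continuous_on) blast

text \<open>Inside \<open>m1\<close> the derivatives of \<open>g_fun\<close> may be cut off at \<open>|r| < 1/2\<close> because \<open>chiL\<close>
  vanishes beyond \<open>1/3\<close>; the cut-off keeps them where they are derivatives of a holomorphic function.\<close>

lemma borel_measurable_m1:
  fixes chiL :: "real \<Rightarrow> real"
  assumes cont: "continuous_on {0..} chiL" and vanish: "\<And>r. r \<ge> 1/3 \<Longrightarrow> chiL r = 0"
  shows "(\<lambda>\<xi>::'a::euclidean_space. m1 chiL b l \<xi> t) \<in> borel_measurable borel"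
proof -
  define I where "I r = (indicator {r::real. \<bar>r\<bar> < 1/2} r :: real)" for r
  define \<Phi> where "\<Phi> r = I r * (exp (-t/2) * cos_sqrt_hderiv 0 (t^2 * (r^2 - 1/4)))
      - exp (-t/2) * (\<Sum>k<b. (1/4)^k * (1 / fact k) * ((-(t^2))^k * (I r * cos_sqrt_hderiv k (t^2 * r^2))))
      - I r * D1 l r t" for r
  have "\<Phi> \<in> borel_measurable borel"
    using borel_measurable_cos_sqrt_hderiv borel_measurable_indicator_D1
    unfolding \<Phi>_def[abs_def] I_def by measurable
  moreover have "(\<lambda>\<xi>::'a. chiL (norm \<xi>)) \<in> borel_measurable borel"
    by (intro borel_measurable_continuous_onI continuous_on_compose2[OF cont continuous_on_norm_id]) auto
  moreover have "m1 chiL b l \<xi> t = chiL (norm \<xi>) * \<Phi> (norm \<xi>)" for \<xi> :: 'a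
  proof (cases "norm \<xi> < 1/2")
    case True
    then show ?thesis
      unfolding m1_def \<Phi>_def I_def W1_eq cos_sqrt_eq_cos_sqrt_hderiv_0
      by (simp add: algebra_simps sum_distrib_left)
  qed (simp add: m1_def vanish)
  ultimately show ?thesis by simp
qed

lemma abs_m1_le:
  fixes \<xi> :: "'a::real_normed_vector"
  assumes t: "t \<ge> 1"
    and vanish: "\<And>r. r \<ge> 1/3 \<Longrightarrow> chiL r = 0"
    and M: "\<And>r. 0 \<le> r \<Longrightarrow> r \<le> 1/3 \<Longrightarrow> \<bar>chiL r\<bar> \<le> M"
  shows "\<bar>m1 chiL b l \<xi> t\<bar> \<le> indicator (cball 0 1) \<xi> *
      (M * exp (-t/2) * (1/2 + real b * t powr (2 * (real b - 1)))
       + M * 18^l * fact l * t powr (- real l) * exp (- t * (norm \<xi>)^2 / 4))"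
proof (cases "norm \<xi> \<le> 1/3")
  case False
  then show ?thesis using vanish M[of 0] by (simp add: m1_def)
next
  case True
  define r where "r = norm \<xi>"
  have r: "0 \<le> r" "r \<le> 1/3" using True by (auto simp: r_def)
  have "r^2 < 1/4" using power_mono[OF r(2) r(1), of 2] by (simp add: power_divide)
  define E where "E = exp (-t/2 - t * sqrt (1/4 - r^2))"
  have E: "0 \<le> E" "E \<le> exp (-t/2)" using t \<open>r^2 < 1/4\<close> by (auto simp: E_def)
  have "m1 chiL b l \<xi> t = chiL r * ((1/2 * g_fun r 1 t - D1 l r t) + 1/2 * E - exp (-t/2) * W1 b r t)"
    unfolding m1_def r_def[symmetric] exp_cos_sqrt_eq_g_fun[OF \<open>r^2 < 1/4\<close>] E_def
    by (simp add: algebra_simps)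
  moreover have "\<bar>(1/2 * g_fun r 1 t - D1 l r t) + 1/2 * E - exp (-t/2) * W1 b r t\<bar>
      \<le> exp (-t/2) * (1/2 + real b * t powr (2 * (real b - 1)))
        + 18^l * fact l * t powr (- real l) * exp (- t * r^2 / 4)"
  proof -
    have "\<bar>exp (-t/2) * W1 b r t\<bar> \<le> exp (-t/2) * (real b * t powr (2 * (real b - 1)))"
      using abs_W1_le[OF t, of b r] by (simp add: abs_mult)
    moreover have "\<bar>1/2 * g_fun r 1 t - D1 l r t\<bar> \<le> 18^l * fact l * t powr (- real l) * exp (- t * r^2 / 4)"
      using abs_half_g_fun_minus_D1_le_powr[OF r, of t l] t by simp
    ultimately show ?thesis using E by (simp add: algebra_simps)
  qed
  moreover have "0 \<le> M" "\<bar>chiL r\<bar> \<le> M" using M[OF r] by auto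
  ultimately have "\<bar>m1 chiL b l \<xi> t\<bar> \<le> M * (exp (-t/2) * (1/2 + real b * t powr (2 * (real b - 1)))
        + 18^l * fact l * t powr (- real l) * exp (- t * r^2 / 4))"
    by (simp add: abs_mult mult_mono)
  then show ?thesis using True by (simp add: r_def algebra_simps)
qed

lemma summable_gaussian_weights: "summable (\<lambda>j. exp (- ((real j)^2) / 2) * (real j + 1)^d)"
proof (rule summable_comparison_test'[OF summable_mult[OF summable_geometric[of "exp (-1/2)"]]])
  fix j :: nat
  have "exp (- ((real j)^2) / 2) \<le> exp (1/2 - real j)"
    using zero_le_power2[of "real j - 1"] by (simp add: power2_eq_square algebra_simps)
  moreover have "(real j + 1)^d \<le> 2^d * fact d * exp ((real j + 1) / 2)"
    using pow_div_fact_le_exp[of "(real j + 1) / 2" d] by (simp add: field_simps power_divide)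
  ultimately have "norm (exp (- ((real j)^2) / 2) * (real j + 1)^d)
      \<le> exp (1/2 - real j) * (2^d * fact d * exp ((real j + 1) / 2))"
    by (simp add: mult_mono)
  also have "\<dots> = 2^d * fact d * exp 1 * exp (-1/2) ^ j"
    by (simp add: exp_of_nat_mult[symmetric] mult_ac flip: exp_add) (simp add: field_simps)
  finally show "norm (exp (- ((real j)^2) / 2) * (real j + 1)^d) \<le> 2^d * fact d * exp 1 * exp (-1/2) ^ j"
    by (simp add: mult_ac)
qed simp

text \<open>On the unit ball the Gaussian is dominated by a finite sum of indicators of the balls of radius
  \<open>(j + 1) / \<surd>t\<close>, weighted by \<open>exp (- j\<^sup>2 / 2)\<close>.\<close>

lemma gaussian_unit_ball_integral_le:
  assumes t: "t \<ge> 1"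
  shows "integrable lborel (\<lambda>\<xi>::'a::euclidean_space. indicator (cball 0 1) \<xi> * exp (- t * (norm \<xi>)^2 / 2))"
    and "integral\<^sup>L lborel (\<lambda>\<xi>::'a. indicator (cball 0 1) \<xi> * exp (- t * (norm \<xi>)^2 / 2))
      \<le> measure lborel (ball (0::'a) 1) * (\<Sum>j. exp (- ((real j)^2) / 2) * (real j + 1)^DIM('a))
         * t powr (- real DIM('a) / 2)"
proof -
  define J where "J = Suc (nat \<lfloor>sqrt t\<rfloor>)"
  define \<rho> where "\<rho> j = (real j + 1) / sqrt t" for j
  define w where "w j = exp (- ((real j)^2) / 2)" for j
  define G where "G \<xi> = (\<Sum>j<J. w j * indicator (ball 0 (\<rho> j)) \<xi>)" for \<xi> :: 'a
  have \<rho>: "\<rho> j \<ge> 0" for j using t by (simp add: \<rho>_def)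
  have ball_int: "integrable lborel (\<lambda>\<xi>::'a. w j * indicator (ball 0 (\<rho> j)) \<xi>)" for j
    by (intro integrable_mult_right integrable_real_indicator emeasure_bounded_finite) auto
  then have G_int: "integrable lborel G" unfolding G_def[abs_def] by (rule Bochner_Integration.integrable_sum)
  have le_G: "indicator (cball 0 1) \<xi> * exp (- t * (norm \<xi>)^2 / 2) \<le> G \<xi>" for \<xi> :: 'a
  proof (cases "norm \<xi> \<le> 1")
    case False
    then show ?thesis unfolding G_def w_def by (simp add: sum_nonneg)
  next
    case True
    define j where "j = nat \<lfloor>sqrt t * norm \<xi>\<rfloor>"
    have j: "real j \<le> sqrt t * norm \<xi>" "sqrt t * norm \<xi> < real j + 1"
      using t by (simp_all add: j_def)
    have "sqrt t * norm \<xi> \<le> sqrt t" using True t mult_left_mono[OF True, of "sqrt t"] by simp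
    then have "j < J" unfolding j_def J_def using floor_mono nat_mono less_Suc_eq_le by blast
    have "norm \<xi> < \<rho> j" using j t by (simp add: \<rho>_def field_simps)
    have "(real j)^2 \<le> t * (norm \<xi>)^2"
      using power_mono[OF j(1), of 2] t by (simp add: power_mult_distrib)
    then have "indicator (cball 0 1) \<xi> * exp (- t * (norm \<xi>)^2 / 2) \<le> w j * indicator (ball 0 (\<rho> j)) \<xi>"
      using True \<open>norm \<xi> < \<rho> j\<close> by (simp add: w_def)
    also have "\<dots> \<le> G \<xi>"
      unfolding G_def using \<open>j < J\<close> by (intro member_le_sum) (auto simp: w_def)
    finally show ?thesis .
  qed
  show gauss_int: "integrable lborel (\<lambda>\<xi>::'a. indicator (cball 0 1) \<xi> * exp (- t * (norm \<xi>)^2 / 2))"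
  proof (rule Bochner_Integration.integrable_bound[OF G_int])
    show "(\<lambda>\<xi>::'a. indicator (cball 0 1) \<xi> * exp (- t * (norm \<xi>)^2 / 2)) \<in> borel_measurable lborel"
      by (intro borel_measurable_times borel_measurable_continuous_onI continuous_intros
          borel_measurable_indicator) (simp_all add: borel_closed)
    show "AE \<xi> in lborel. norm (indicator (cball 0 1) \<xi> * exp (- t * (norm \<xi>)^2 / 2)) \<le> norm (G \<xi>)"
    proof (rule AE_I2)
      fix \<xi> :: 'a
      have "0 \<le> indicator (cball 0 1) \<xi> * exp (- t * (norm \<xi>)^2 / 2)" by simp
      then show "norm (indicator (cball 0 1) \<xi> * exp (- t * (norm \<xi>)^2 / 2)) \<le> norm (G \<xi>)"
        using le_G[of \<xi>] by simp
    qed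
  qed
  have "integral\<^sup>L lborel (\<lambda>\<xi>::'a. indicator (cball 0 1) \<xi> * exp (- t * (norm \<xi>)^2 / 2))
      \<le> integral\<^sup>L lborel G"
    by (rule integral_mono[OF gauss_int G_int]) (rule le_G)
  also have "integral\<^sup>L lborel G = (\<Sum>j<J. w j * (\<rho> j ^ DIM('a) * measure lborel (ball (0::'a) 1)))"
  proof -
    have "integral\<^sup>L lborel (\<lambda>\<xi>::'a. w j * indicator (ball 0 (\<rho> j)) \<xi>)
        = w j * (\<rho> j ^ DIM('a) * measure lborel (ball (0::'a) 1))" for j
      using content_ball_conv_unit_ball[OF \<rho>[of j], where 'a = 'a] by simp
    then show ?thesis
      unfolding G_def[abs_def] Bochner_Integration.integral_sum[OF ball_int] by (rule sum.cong[OF refl])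
  qed
  also have "\<dots> = measure lborel (ball (0::'a) 1) * t powr (- real DIM('a) / 2) * (\<Sum>j<J. w j * (real j + 1)^DIM('a))"
  proof -
    have "(sqrt t)^DIM('a) = (t powr (1/2))^DIM('a)" using t by (simp add: powr_half_sqrt)
    also have "\<dots> = t powr (real DIM('a) / 2)" using t by (subst powr_power) (simp_all add: mult.commute)
    finally have sqrt_pow: "(sqrt t)^DIM('a) = t powr (real DIM('a) / 2)" .
    have "\<rho> j ^ DIM('a) = (real j + 1)^DIM('a) * t powr (- real DIM('a) / 2)" for j
    proof -
      have "\<rho> j ^ DIM('a) = (real j + 1)^DIM('a) * inverse (t powr (real DIM('a) / 2))"
        unfolding \<rho>_def power_divide sqrt_pow by (simp only: divide_inverse)
      also have "inverse (t powr (real DIM('a) / 2)) = t powr (- real DIM('a) / 2)" by (simp add: powr_minus)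
      finally show ?thesis .
    qed
    then show ?thesis unfolding sum_distrib_left by (intro sum.cong) (simp_all add: mult_ac)
  qed
  also have "\<dots> \<le> measure lborel (ball (0::'a) 1) * t powr (- real DIM('a) / 2)
      * (\<Sum>j. exp (- ((real j)^2) / 2) * (real j + 1)^DIM('a))"
  proof (intro mult_left_mono)
    show "(\<Sum>j<J. w j * (real j + 1)^DIM('a)) \<le> (\<Sum>j. exp (- ((real j)^2) / 2) * (real j + 1)^DIM('a))"
      unfolding w_def by (rule sum_le_suminf[OF summable_gaussian_weights]) auto
  qed auto
  finally show "integral\<^sup>L lborel (\<lambda>\<xi>::'a. indicator (cball 0 1) \<xi> * exp (- t * (norm \<xi>)^2 / 2))
      \<le> measure lborel (ball (0::'a) 1) * (\<Sum>j. exp (- ((real j)^2) / 2) * (real j + 1)^DIM('a))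
         * t powr (- real DIM('a) / 2)"
    by (simp only: mult_ac)
qed

lemma L2_norm_le_of_gaussian_domination:
  obtains c :: real where "c \<ge> 0"
    and "\<And>t X Y (m :: 'a::euclidean_space \<Rightarrow> real). t \<ge> 1 \<Longrightarrow> X \<ge> 0 \<Longrightarrow> Y \<ge> 0 \<Longrightarrow>
      m \<in> borel_measurable lborel \<Longrightarrow>
      (\<And>\<xi>. \<bar>m \<xi>\<bar> \<le> indicator (cball 0 1) \<xi> * (X + Y * exp (- t * (norm \<xi>)^2 / 4))) \<Longrightarrow>
      integrable lborel (\<lambda>\<xi>. (m \<xi>)^2) \<and>
      sqrt (integral\<^sup>L lborel (\<lambda>\<xi>. (m \<xi>)^2)) \<le> c * (X + Y * t powr (- real DIM('a) / 4))"
proof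
  define V where "V = measure lborel (cball (0::'a) 1)"
  define K where "K = measure lborel (ball (0::'a) 1) * (\<Sum>j. exp (- ((real j)^2) / 2) * (real j + 1)^DIM('a))"
  have K: "K \<ge> 0"
    unfolding K_def using summable_gaussian_weights by (intro mult_nonneg_nonneg suminf_nonneg) auto
  have V: "V \<ge> 0" unfolding V_def by (rule measure_nonneg)
  show "sqrt (2 * V) + sqrt (2 * K) \<ge> 0" using V K by simp
  fix t X Y and m :: "'a \<Rightarrow> real"
  assume t: "t \<ge> 1" and XY: "X \<ge> 0" "Y \<ge> 0" and m_meas: "m \<in> borel_measurable lborel"
    and m_le: "\<And>\<xi>. \<bar>m \<xi>\<bar> \<le> indicator (cball 0 1) \<xi> * (X + Y * exp (- t * (norm \<xi>)^2 / 4))"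
  define gauss where "gauss \<xi> = indicator (cball 0 1) \<xi> * exp (- t * (norm \<xi>)^2 / 2)" for \<xi> :: 'a
  define B where "B \<xi> = 2 * X^2 * indicator (cball 0 1) \<xi> + 2 * Y^2 * gauss \<xi>" for \<xi> :: 'a
  have ind_int: "integrable lborel (\<lambda>\<xi>::'a. indicator (cball 0 1) \<xi> :: real)"
    by (intro integrable_real_indicator emeasure_bounded_finite) auto
  have gauss_int: "integrable lborel gauss"
    unfolding gauss_def[abs_def] by (rule gaussian_unit_ball_integral_le(1)[OF t])
  have B_int: "integrable lborel B" unfolding B_def[abs_def] using ind_int gauss_int by auto
  have sq_le: "(m \<xi>)^2 \<le> B \<xi>" for \<xi>
  proof -
    define e where "e = exp (- t * (norm \<xi>)^2 / 4)"
    have "\<bar>m \<xi>\<bar>^2 \<le> (indicator (cball 0 1) \<xi> * (X + Y * e))^2"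
      unfolding e_def by (rule power_mono[OF m_le abs_ge_zero])
    moreover have "(X + Y * e)^2 \<le> 2 * X^2 + 2 * (Y * e)^2"
    proof -
      have "2 * X^2 + 2 * (Y * e)^2 - (X + Y * e)^2 = (X - Y * e)^2"
        by (simp add: power2_eq_square algebra_simps)
      then show ?thesis using zero_le_power2[of "X - Y * e"] by linarith
    qed
    moreover have "(Y * e)^2 = Y^2 * exp (- t * (norm \<xi>)^2 / 2)"
    proof -
      have "e^2 = exp (real 2 * (- t * (norm \<xi>)^2 / 4))" unfolding e_def exp_of_nat_mult ..
      then show ?thesis by (simp add: power_mult_distrib)
    qed
    ultimately show ?thesis by (cases "norm \<xi> \<le> 1") (auto simp: B_def gauss_def indicator_def)
  qed
  have m_int: "integrable lborel (\<lambda>\<xi>. (m \<xi>)^2)"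
  proof (rule Bochner_Integration.integrable_bound[OF B_int])
    show "(\<lambda>\<xi>. (m \<xi>)^2) \<in> borel_measurable lborel" using m_meas by measurable
    show "AE \<xi> in lborel. norm ((m \<xi>)^2) \<le> norm (B \<xi>)"
      using sq_le by (intro AE_I2) (simp add: order.trans[OF _ abs_ge_self])
  qed
  have "integral\<^sup>L lborel (\<lambda>\<xi>. (m \<xi>)^2) \<le> (X * sqrt (2 * V))^2 + (Y * sqrt (2 * K) * t powr (- real DIM('a) / 4))^2"
  proof -
    have "integral\<^sup>L lborel (\<lambda>\<xi>. (m \<xi>)^2) \<le> integral\<^sup>L lborel B"
      by (rule integral_mono[OF m_int B_int sq_le])
    also have "\<dots> = 2 * X^2 * V + 2 * Y^2 * integral\<^sup>L lborel gauss"
      unfolding B_def[abs_def] using ind_int gauss_int by (simp add: V_def)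
    also have "\<dots> \<le> 2 * X^2 * V + 2 * Y^2 * (K * t powr (- real DIM('a) / 2))"
      using gaussian_unit_ball_integral_le(2)[OF t] by (intro add_left_mono mult_left_mono) (simp_all add: gauss_def[abs_def] K_def)
    also have "t powr (- real DIM('a) / 2) = (t powr (- real DIM('a) / 4))^2"
      using t by (subst powr_power) simp_all
    finally show ?thesis using K V by (simp add: power_mult_distrib)
  qed
  then have "sqrt (integral\<^sup>L lborel (\<lambda>\<xi>. (m \<xi>)^2))
      \<le> sqrt ((X * sqrt (2 * V))^2 + (Y * sqrt (2 * K) * t powr (- real DIM('a) / 4))^2)"
    by (rule real_sqrt_le_mono)
  also have "\<dots> \<le> sqrt ((X * sqrt (2 * V))^2) + sqrt ((Y * sqrt (2 * K) * t powr (- real DIM('a) / 4))^2)"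
    by (rule sqrt_add_le_add_sqrt) simp_all
  also have "\<dots> = X * sqrt (2 * V) + Y * sqrt (2 * K) * t powr (- real DIM('a) / 4)"
    using XY K V by simp
  also have "\<dots> \<le> (sqrt (2 * V) + sqrt (2 * K)) * (X + Y * t powr (- real DIM('a) / 4))"
    using XY K V by (simp add: algebra_simps)
  finally show "integrable lborel (\<lambda>\<xi>. (m \<xi>)^2) \<and>
      sqrt (integral\<^sup>L lborel (\<lambda>\<xi>. (m \<xi>)^2)) \<le> (sqrt (2 * V) + sqrt (2 * K)) * (X + Y * t powr (- real DIM('a) / 4))"
    using m_int by simp
qed

lemma exp_neg_half_le_powr:
  assumes t: "t \<ge> 1" and p: "- real N \<le> p"
  shows "exp (- t / 2) \<le> fact N * 2^N * t powr p"
proof -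
  have "(t/2)^N / fact N \<le> exp (t/2)" using t by (intro pow_div_fact_le_exp) simp
  then have "t^N \<le> fact N * 2^N * exp (t/2)" by (simp add: field_simps power_divide)
  then have "exp (- t / 2) \<le> fact N * 2^N * inverse (t^N)"
    using t by (simp add: exp_minus field_simps)
  also have "inverse (t^N) = t powr (- real N)" using t by (simp add: powr_minus powr_realpow)
  also have "t powr (- real N) \<le> t powr p" using t p by (intro powr_mono) auto
  finally show ?thesis by (simp add: mult_left_mono)
qed

lemma exp_powr_sum_le:
  assumes t: "t \<ge> 1" and p: "- real N \<le> p" and K: "K \<ge> 0"
  shows "exp (- t / 2) * (1/2 + real b * t powr q) + K * t powr p
    \<le> (real b + fact N * 2^N + K) * (t powr q * exp (- t / 2) + t powr p)"
proof -
  have "exp (- t / 2) / 2 \<le> fact N * 2^N * t powr p"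
    using exp_neg_half_le_powr[OF t p] exp_gt_zero[of "- t / 2"] by linarith
  moreover have "0 \<le> real b * t powr p" "0 \<le> (fact N * 2^N + K) * (t powr q * exp (- t / 2))"
    using K by simp_all
  moreover have "(real b + fact N * 2^N + K) * (t powr q * exp (- t / 2) + t powr p)
    = exp (- t / 2) * (1/2 + real b * t powr q) + K * t powr p
      + (fact N * 2^N * t powr p - exp (- t / 2) / 2) + real b * t powr p
      + (fact N * 2^N + K) * (t powr q * exp (- t / 2))"
    by (simp add: algebra_simps)
  ultimately show ?thesis by linarith
qed

lemma L2_norm_m1_le:
  fixes chiL :: "real \<Rightarrow> real"
  assumes cont: "continuous_on {0..} chiL"
    and vanish: "\<And>r. r \<ge> 1/3 \<Longrightarrow> chiL r = 0"
    and M: "\<And>r. 0 \<le> r \<Longrightarrow> r \<le> 1/3 \<Longrightarrow> \<bar>chiL r\<bar> \<le> M"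
  obtains c where "c \<ge> 0"
    and "\<And>t. t \<ge> 1 \<Longrightarrow> integrable lborel (\<lambda>\<xi>::'a::euclidean_space. (m1 chiL b l \<xi> t)^2) \<and>
      sqrt (integral\<^sup>L lborel (\<lambda>\<xi>::'a. (m1 chiL b l \<xi> t)^2))
        \<le> c * (exp (- t / 2) * (1/2 + real b * t powr (2 * (real b - 1)))
               + 18^l * fact l * t powr (- real DIM('a) / 4 - real l))"
proof -
  have "M \<ge> 0" using M[of 0] by simp
  obtain c where "c \<ge> 0" and L2: "\<And>t X Y (m :: 'a \<Rightarrow> real). t \<ge> 1 \<Longrightarrow> X \<ge> 0 \<Longrightarrow> Y \<ge> 0 \<Longrightarrow>
      m \<in> borel_measurable lborel \<Longrightarrow>
      (\<And>\<xi>. \<bar>m \<xi>\<bar> \<le> indicator (cball 0 1) \<xi> * (X + Y * exp (- t * (norm \<xi>)^2 / 4))) \<Longrightarrow>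
      integrable lborel (\<lambda>\<xi>. (m \<xi>)^2) \<and>
      sqrt (integral\<^sup>L lborel (\<lambda>\<xi>. (m \<xi>)^2)) \<le> c * (X + Y * t powr (- real DIM('a) / 4))"
    using L2_norm_le_of_gaussian_domination by blast
  show ?thesis
  proof (rule that[of "c * M"])
    show "c * M \<ge> 0" using \<open>c \<ge> 0\<close> \<open>M \<ge> 0\<close> by simp
    fix t :: real assume t: "t \<ge> 1"
    have "t powr (- real l) * t powr (- real DIM('a) / 4) = t powr (- real l + - real DIM('a) / 4)"
      by (rule powr_add[symmetric])
    also have "\<dots> = t powr (- real DIM('a) / 4 - real l)" by (rule arg_cong[where f = "(powr) t"]) simp
    finally have powr_eq: "t powr (- real l) * t powr (- real DIM('a) / 4) = t powr (- real DIM('a) / 4 - real l)" .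
    have "integrable lborel (\<lambda>\<xi>::'a. (m1 chiL b l \<xi> t)^2) \<and>
      sqrt (integral\<^sup>L lborel (\<lambda>\<xi>::'a. (m1 chiL b l \<xi> t)^2))
        \<le> c * (M * exp (-t/2) * (1/2 + real b * t powr (2 * (real b - 1)))
           + M * 18^l * fact l * t powr (- real l) * t powr (- real DIM('a) / 4))"
    proof (rule L2[OF t])
      show "(\<lambda>\<xi>::'a. m1 chiL b l \<xi> t) \<in> borel_measurable lborel"
        using borel_measurable_m1[where chiL = chiL, OF cont vanish] by simp
    qed (use \<open>M \<ge> 0\<close> abs_m1_le[where chiL = chiL and M = M, OF t vanish M] in auto)
    then show "integrable lborel (\<lambda>\<xi>::'a. (m1 chiL b l \<xi> t)^2) \<and>
      sqrt (integral\<^sup>L lborel (\<lambda>\<xi>::'a. (m1 chiL b l \<xi> t)^2))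
        \<le> c * M * (exp (- t / 2) * (1/2 + real b * t powr (2 * (real b - 1)))
               + 18^l * fact l * t powr (- real DIM('a) / 4 - real l))"
      unfolding powr_eq[symmetric] by (simp add: algebra_simps)
  qed
qed

theorem proposition3:
  fixes chiL :: "real \<Rightarrow> real" and b l :: nat
  assumes smooth: "\<exists>D :: nat \<Rightarrow> real \<Rightarrow> real. D 0 = chiL \<and>
            (\<forall>k x. x \<ge> 0 \<longrightarrow> (D k has_real_derivative D (Suc k) x) (at x within {0..}))"
    and vanish: "\<And>r. r \<ge> 1/3 \<Longrightarrow> chiL r = 0"
    and one: "\<And>r. 0 \<le> r \<Longrightarrow> r \<le> 1/4 \<Longrightarrow> chiL r = 1"
  shows "\<exists>C > 0. \<forall>t \<ge> 1.
           integrable lborel (\<lambda>xi :: real ^ 'n. (m1 chiL b l xi t)^2) \<and>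
           sqrt (integral\<^sup>L lborel (\<lambda>xi :: real ^ 'n. (m1 chiL b l xi t)^2))
             \<le> C * t powr (2 * (real b - 1)) * exp (- t / 2)
               + C * t powr (- real CARD('n) / 4 - real l)"
proof -
  have cont: "continuous_on {0..} chiL"
    using smooth by (metis DERIV_continuous continuous_on_eq_continuous_within atLeast_iff)
  obtain M where "\<forall>r \<in> {0..1/3}. \<bar>chiL r\<bar> \<le> M"
    using compact_imp_bounded[OF compact_continuous_image[OF continuous_on_subset[OF cont], of "{0..1/3}"]]
    by (auto simp: bounded_real)
  then obtain c where "c \<ge> 0" and L2: "\<And>t. t \<ge> 1 \<Longrightarrow>
      integrable lborel (\<lambda>\<xi>::real ^ 'n. (m1 chiL b l \<xi> t)^2) \<and>
      sqrt (integral\<^sup>L lborel (\<lambda>\<xi>::real ^ 'n. (m1 chiL b l \<xi> t)^2))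
        \<le> c * (exp (- t / 2) * (1/2 + real b * t powr (2 * (real b - 1)))
               + 18^l * fact l * t powr (- real DIM(real ^ 'n) / 4 - real l))"
    using L2_norm_m1_le[OF cont vanish] by (metis atLeastAtMost_iff)
  define K :: real where "K = real b + fact (CARD('n) + l) * 2^(CARD('n) + l) + 18^l * fact l"
  have "K \<ge> 0" by (simp add: K_def)
  show ?thesis
  proof (intro exI[of _ "1 + c * K"] conjI allI impI)
    show "1 + c * K > 0" using \<open>c \<ge> 0\<close> \<open>K \<ge> 0\<close> by (simp add: add_pos_nonneg)
    fix t :: real assume t: "t \<ge> 1"
    have "c * (exp (- t / 2) * (1/2 + real b * t powr (2 * (real b - 1)))
               + 18^l * fact l * t powr (- real CARD('n) / 4 - real l))
      \<le> c * (K * (t powr (2 * (real b - 1)) * exp (- t / 2) + t powr (- real CARD('n) / 4 - real l)))"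
      unfolding K_def using t \<open>c \<ge> 0\<close> by (intro mult_left_mono exp_powr_sum_le) auto
    also have "\<dots> \<le> (1 + c * K) * t powr (2 * (real b - 1)) * exp (- t / 2)
        + (1 + c * K) * t powr (- real CARD('n) / 4 - real l)"
      by (simp add: algebra_simps)
    finally show "integrable lborel (\<lambda>xi :: real ^ 'n. (m1 chiL b l xi t)^2)"
      "sqrt (integral\<^sup>L lborel (\<lambda>xi :: real ^ 'n. (m1 chiL b l xi t)^2))
        \<le> (1 + c * K) * t powr (2 * (real b - 1)) * exp (- t / 2)
          + (1 + c * K) * t powr (- real CARD('n) / 4 - real l)"
      using L2[OF t] by auto
  qed
qed

end
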